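(* Let $C$ be a binary quasi-cyclic code whose parity-check matrix, after permuting rows and columns, is an $s\lambda\times s\rho$ array of $L\times L$ circulant matrices over $\mathrm{GF}(2)$, with $s\lambda\times s\rho$ weight matrix $A=(a_{x,y})$. For $S\subseteq\{1,\dots,s\rho\}$ with $|S|=s\lambda+1$, define $$\psi(S)=\sum_{\substack{S'\subset S\\ S'=\{i_1,\dots,i_{s\lambda}\}}}\ \sum_{\sigma\in\Pi} a_{\sigma(1),i_1}a_{\sigma(2),i_2}\cdots a_{\sigma(s\lambda),i_{s\lambda}},$$ where $\Pi$ is the set of all permutations of $\{1,\dots,s\lambda\}$. In other words, $\psi(S)$ is the sum, over all $s\lambda$-element subsets $S'$ of $S$, of the permanent of the submatrix of $A$ formed by the columns in $S'$. Then $$d_{\min}(C)\le \min\{\psi(S): S\subseteq\{1,\dots,s\rho\},\ |S|=s\lambda+1,\ \psi(S)\ne 0\}.$$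
   Context: $s,\lambda,\rho,L$ are positive integers. The weight matrix $A$ of such a parity-check matrix has entry $a_{x,y}$ equal to the number of ones in any row of the circulant block in block-row $x$ and block-column $y$. $d_{\min}(C)$ denotes the minimum Hamming weight of a nonzero codeword of $C$. *)

theory Defs
  imports Main "HOL-Combinatorics.Permutations" "HOL-Library.Extended_Nat"
begin

text \<open>Binary matrices are functions nat => nat => bool (True = 1 in GF(2)), indices 0-based.
  A binary vector of length N is identified with its support, a subset of {..<N}.\<close>

definition code :: "nat \<Rightarrow> nat \<Rightarrow> (nat \<Rightarrow> nat \<Rightarrow> bool) \<Rightarrow> nat set set" where
  "code M N H = {c. c \<subseteq> {..<N} \<and> (\<forall>r<M. even (card {j\<in>c. H r j}))}"

text \<open>Minimum Hamming weight of a nonzero codeword (infinity if there is none).\<close>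
definition dmin :: "nat set set \<Rightarrow> enat" where
  "dmin C = Inf {enat (card c) | c. c \<in> C \<and> c \<noteq> {}}"

definition block_circulant :: "nat \<Rightarrow> nat \<Rightarrow> nat \<Rightarrow> (nat \<Rightarrow> nat \<Rightarrow> bool) \<Rightarrow> bool" where
  "block_circulant m n L B \<longleftrightarrow>
     (\<forall>x<m. \<forall>y<n. \<forall>i<L. \<forall>j<L.
        B (x*L + i) (y*L + j) = B (x*L) (y*L + (j + L - i) mod L))"

text \<open>Weight matrix: a x y = number of ones in (any, here the first) row of block (x,y).\<close>
definition weight_matrix :: "nat \<Rightarrow> (nat \<Rightarrow> nat \<Rightarrow> bool) \<Rightarrow> nat \<Rightarrow> nat \<Rightarrow> nat" where
  "weight_matrix L B x y = card {j. j < L \<and> B (x*L) (y*L + j)}"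

definition perm_cols :: "(nat \<Rightarrow> nat \<Rightarrow> nat) \<Rightarrow> nat \<Rightarrow> nat set \<Rightarrow> nat" where
  "perm_cols A m S' = (\<Sum>\<sigma>\<in>{\<sigma>. \<sigma> permutes {..<m}}.
      \<Prod>k<m. A (\<sigma> k) (sorted_list_of_set S' ! k))"

definition psi :: "(nat \<Rightarrow> nat \<Rightarrow> nat) \<Rightarrow> nat \<Rightarrow> nat set \<Rightarrow> nat" where
  "psi A m S = (\<Sum>S'\<in>{S'. S' \<subseteq> S \<and> card S' = m}. perm_cols A m S')"

end

theory Submission
  imports Defs "HOL-Computational_Algebra.Polynomial" "HOL-Library.Z2" "HOL-Library.FuncSet"
begin

(*
  Read GF(2)^L as GF(2)[X]/(X^L - 1).  An L x L circulant block then acts as multiplication by a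
  polynomial whose number of terms is the corresponding entry of the weight matrix A, so the
  parity-check matrix becomes an m x n matrix M over a commutative ring of characteristic 2
  (m = s lambda, n = s rho).  Let |S| = m + 1 and psi(S) > 0.  A nonzero term of psi(S) matches
  all m rows with all columns of S but one through nonzero entries of A.  Starting from the empty
  minor, rows are added greedily, each together with its matched column, as long as the square
  minor T x (V - {j}) stays nonzero modulo X^L - 1.  Once this is impossible, the cofactor vector
  w_u = perm M[T, V - {u}] (u in V) is a kernel vector of M that is nonzero at j: for a row of T
  the expansion is a permanent with a repeated row, which vanishes in characteristic 2, and for any
  other row it is a larger minor, which vanishes by maximality.  The number of terms is
  subadditive and submultiplicative, so the weight of w_u is at most perm A[T, V - {u}], and the
  matching of the remaining rows bounds this by perm A[all rows, S - {u}].  Summing over u gives a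
  nonzero codeword of weight at most psi(S).
*)

section \<open>Permanents\<close>

definition permanent :: "('a \<Rightarrow> 'b \<Rightarrow> 'c::comm_semiring_1) \<Rightarrow> 'a set \<Rightarrow> 'b set \<Rightarrow> 'c" where
  "permanent M T V = (\<Sum>f | f \<in> T \<rightarrow>\<^sub>E V \<and> bij_betw f T V. \<Prod>x\<in>T. M x (f x))"

lemma finite_extensional_bijections:
  "finite T \<Longrightarrow> finite V \<Longrightarrow> finite {f. f \<in> T \<rightarrow>\<^sub>E V \<and> bij_betw f T V}"
  by (rule finite_subset[of _ "T \<rightarrow>\<^sub>E V"]) (auto intro: finite_PiE)

lemma permanent_empty [simp]: "permanent M {} {} = 1"
  by (simp add: permanent_def bij_betw_def)

lemma permanent_insert_row:
  assumes "finite T" "finite V" "r \<notin> T"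
  shows "permanent M (insert r T) V = (\<Sum>v\<in>V. M r v * permanent M T (V - {v}))"
proof -
  let ?B = "\<lambda>T V. {f. f \<in> T \<rightarrow>\<^sub>E V \<and> bij_betw f T V}"
  have "permanent M (insert r T) V = (\<Sum>(v, g)\<in>(SIGMA v:V. ?B T (V - {v})). M r v * (\<Prod>x\<in>T. M x (g x)))"
    unfolding permanent_def
  proof (rule sum.reindex_bij_witness[where j = "\<lambda>f. (f r, f(r := undefined))" and i = "\<lambda>(v, g). g(r := v)"])
    fix f assume f: "f \<in> ?B (insert r T) V"
    then show "(case (f r, f(r := undefined)) of (v, g) \<Rightarrow> g(r := v)) = f"
      by auto
    have "bij_betw f T (V - {f r})"
      using f assms(3) bij_betw_DiffI[of f "insert r T" V "{r}" "{f r}"] by (auto simp: bij_betw_def)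
    then have "bij_betw (f(r := undefined)) T (V - {f r})"
      using assms(3) by (subst bij_betw_cong[where g = f]) auto
    moreover have "f(r := undefined) \<in> extensional T"
      using f by (auto simp: PiE_def extensional_def)
    ultimately show "(f r, f(r := undefined)) \<in> (SIGMA v:V. ?B T (V - {v}))"
      using f by (auto simp: PiE_def dest: bij_betw_imp_funcset)
    show "(case (f r, f(r := undefined)) of (v, g) \<Rightarrow> M r v * (\<Prod>x\<in>T. M x (g x))) = (\<Prod>x\<in>insert r T. M x (f x))"
      using assms by (auto intro!: arg_cong[where f = "(*) _"] prod.cong)
  next
    fix vg assume "vg \<in> (SIGMA v:V. ?B T (V - {v}))"
    then obtain v g where vg: "vg = (v, g)" "v \<in> V" "g \<in> T \<rightarrow>\<^sub>E V - {v}" "bij_betw g T (V - {v})"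
      by auto
    have gr: "g r = undefined"
      using vg(3) assms(3) by (rule PiE_arb)
    show "((case vg of (v, g) \<Rightarrow> g(r := v)) r, (case vg of (v, g) \<Rightarrow> g(r := v))(r := undefined)) = vg"
      using vg(1) fun_upd_idem[of g r, OF gr] by simp
    have "bij_betw (g(r := v)) T (V - {v})"
      using vg(4) assms(3) by (subst bij_betw_cong[where g = g]) auto
    then have "bij_betw (g(r := v)) (T \<union> {r}) (V - {v} \<union> {v})"
      using notIn_Un_bij_betw3[of r T "g(r := v)" "V - {v}"] assms(3) by simp
    then show "(case vg of (v, g) \<Rightarrow> g(r := v)) \<in> ?B (insert r T) V"
      using vg gr by (auto simp: insert_absorb PiE_def extensional_def)
  qed
  also have "\<dots> = (\<Sum>v\<in>V. M r v * permanent M T (V - {v}))"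
    by (simp add: sum.Sigma[symmetric] assms finite_extensional_bijections permanent_def sum_distrib_left)
  finally show ?thesis .
qed

lemma permanent_nonzeroE:
  assumes "finite T" "permanent M T V \<noteq> 0"
  obtains f where "bij_betw f T V" "\<forall>x\<in>T. M x (f x) \<noteq> 0"
proof -
  obtain f where f: "bij_betw f T V" "(\<Prod>x\<in>T. M x (f x)) \<noteq> 0"
    using assms(2) unfolding permanent_def by (auto elim: sum.not_neutral_contains_not_neutral)
  moreover have "\<forall>x\<in>T. M x (f x) \<noteq> 0"
    using f(2) prod_zero[OF assms(1), of "\<lambda>x. M x (f x)"] by blast
  ultimately show ?thesis
    using that by blast
qed

lemma permanent_le_insert:
  fixes A :: "'a \<Rightarrow> 'b \<Rightarrow> nat"
  assumes "finite T" "finite V" "r \<notin> T" "w \<notin> V" "0 < A r w"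
  shows "permanent A T V \<le> permanent A (insert r T) (insert w V)"
proof -
  have "permanent A T V \<le> A r w * permanent A T (insert w V - {w})"
    using assms(4,5) by simp
  also have "\<dots> \<le> (\<Sum>v\<in>insert w V. A r v * permanent A T (insert w V - {v}))"
    using assms(2) by (intro member_le_sum) auto
  also have "\<dots> = permanent A (insert r T) (insert w V)"
    using assms by (simp add: permanent_insert_row)
  finally show ?thesis .
qed

lemma permanent_le_extend:
  fixes A :: "'a \<Rightarrow> 'b \<Rightarrow> nat"
  assumes "finite D" "finite T" "finite V" "T \<inter> D = {}" "V \<inter> \<nu> ` D = {}" "inj_on \<nu> D"
    and "\<forall>r\<in>D. 0 < A r (\<nu> r)"
  shows "permanent A T V \<le> permanent A (T \<union> D) (V \<union> \<nu> ` D)"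
  using assms
proof (induction D rule: finite_induct)
  case (insert d D)
  then have "permanent A T V \<le> permanent A (T \<union> D) (V \<union> \<nu> ` D)"
    by auto
  also have "\<dots> \<le> permanent A (insert d (T \<union> D)) (insert (\<nu> d) (V \<union> \<nu> ` D))"
    using insert by (intro permanent_le_insert) auto
  finally show ?case
    by simp
qed simp

lemma sum_offdiagonal_symmetric_char2:
  fixes g :: "'a \<Rightarrow> 'a \<Rightarrow> 'b::comm_monoid_add"
  assumes "finite V" "\<And>u v. g u v = g v u" "\<And>z :: 'b. z + z = 0"
  shows "(\<Sum>u\<in>V. \<Sum>v\<in>V - {u}. g u v) = 0"
  using assms(1)
proof (induction V rule: finite_induct)
  case (insert a V)
  have "(\<Sum>u\<in>insert a V. \<Sum>v\<in>insert a V - {u}. g u v)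
      = (\<Sum>v\<in>V. g a v) + (\<Sum>u\<in>V. \<Sum>v\<in>insert a V - {u}. g u v)"
    using insert by simp
  also have "\<dots> = (\<Sum>v\<in>V. g a v) + (\<Sum>u\<in>V. g u a + (\<Sum>v\<in>V - {u}. g u v))"
    using insert by (intro arg_cong[where f = "(+) _"] sum.cong) (auto simp: insert_Diff_if)
  also have "\<dots> = (\<Sum>v\<in>V. g a v) + (\<Sum>v\<in>V. g a v)"
    using insert assms(2) by (simp add: sum.distrib)
  finally show ?case
    using assms(3) by simp
qed simp

lemma permanent_repeated_row_char2:
  fixes M :: "'a \<Rightarrow> 'b \<Rightarrow> 'c::comm_ring_1"
  assumes "\<And>z :: 'c. z + z = 0" "finite T" "finite V" "r \<in> T"
  shows "(\<Sum>u\<in>V. M r u * permanent M T (V - {u})) = 0"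
proof -
  obtain T' where T': "T = insert r T'" "r \<notin> T'"
    using mk_disjoint_insert[OF assms(4)] by blast
  have "(\<Sum>u\<in>V. M r u * permanent M T (V - {u}))
      = (\<Sum>u\<in>V. \<Sum>v\<in>V - {u}. M r u * M r v * permanent M T' (V - {u} - {v}))"
    using assms(2,3) T' by (simp add: permanent_insert_row sum_distrib_left mult.assoc)
  also have "\<dots> = 0"
    using assms(1,3) by (intro sum_offdiagonal_symmetric_char2) (auto simp: Diff_insert2[symmetric] insert_commute)
  finally show ?thesis .
qed

locale ring_weight =
  fixes wt :: "'a::comm_semiring_1 \<Rightarrow> nat"
  assumes wt_add: "wt (a + b) \<le> wt a + wt b"
    and wt_mult: "wt (a * b) \<le> wt a * wt b"
    and wt_zero: "wt 0 = 0"
    and wt_one: "wt 1 \<le> 1"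
begin

lemma wt_sum: "wt (\<Sum>x\<in>A. f x) \<le> (\<Sum>x\<in>A. wt (f x))"
proof (induction A rule: infinite_finite_induct)
  case (insert x A)
  then show ?case
    using wt_add[of "f x" "sum f A"] by simp
qed (simp_all add: wt_zero)

lemma wt_prod: "wt (\<Prod>x\<in>A. f x) \<le> (\<Prod>x\<in>A. wt (f x))"
proof (induction A rule: infinite_finite_induct)
  case (insert x A)
  then show ?case
    using wt_mult[of "f x" "prod f A"] order.trans mult_le_mono2 by fastforce
qed (use wt_one in simp_all)

lemma wt_permanent_le:
  assumes "\<And>x v. x \<in> T \<Longrightarrow> v \<in> V \<Longrightarrow> wt (M x v) \<le> A x v"
  shows "wt (permanent M T V) \<le> permanent A T V"
  unfolding permanent_def
proof (rule order.trans[OF wt_sum sum_mono])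
  fix f assume "f \<in> {f. f \<in> T \<rightarrow>\<^sub>E V \<and> bij_betw f T V}"
  then have "wt (M x (f x)) \<le> A x (f x)" if "x \<in> T" for x
    using assms that by auto
  then show "wt (\<Prod>x\<in>T. M x (f x)) \<le> (\<Prod>x\<in>T. A x (f x))"
    by (intro order.trans[OF wt_prod prod_mono]) simp
qed

end

lemma permanent_eq_sum_permutes:
  assumes "bij_betw g T V"
  shows "permanent M T V = (\<Sum>\<sigma> | \<sigma> permutes T. \<Prod>x\<in>T. M x (g (\<sigma> x)))"
proof -
  have g: "inj_on g T" "g ` T = V"
    using assms by (auto simp: bij_betw_def)
  show ?thesis
    unfolding permanent_def
  proof (rule sum.reindex_bij_witness[where j = "\<lambda>f x. if x \<in> T then inv_into T g (f x) else x"
        and i = "\<lambda>\<sigma>. restrict (g \<circ> \<sigma>) T"])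
    fix f assume f: "f \<in> {f. f \<in> T \<rightarrow>\<^sub>E V \<and> bij_betw f T V}"
    then have fT: "f x \<in> g ` T" if "x \<in> T" for x
      using that g by auto
    then show "restrict (g \<circ> (\<lambda>x. if x \<in> T then inv_into T g (f x) else x)) T = f"
      using f by (auto simp: fun_eq_iff f_inv_into_f PiE_def extensional_def)
    show "(\<Prod>x\<in>T. M x (g (if x \<in> T then inv_into T g (f x) else x))) = (\<Prod>x\<in>T. M x (f x))"
      using fT by (intro prod.cong) (auto simp: f_inv_into_f)
    have "bij_betw (inv_into T g \<circ> f) T T"
      using f bij_betw_inv_into[OF assms] bij_betw_trans by blast
    then have "bij_betw (\<lambda>x. if x \<in> T then inv_into T g (f x) else x) T T"
      by (subst bij_betw_cong[where g = "inv_into T g \<circ> f"]) auto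
    then show "(\<lambda>x. if x \<in> T then inv_into T g (f x) else x) \<in> {\<sigma>. \<sigma> permutes T}"
      by (auto intro: bij_imp_permutes)
  next
    fix \<sigma> assume "\<sigma> \<in> {\<sigma>. \<sigma> permutes T}"
    then have \<sigma>: "\<sigma> permutes T"
      by simp
    then show "(\<lambda>x. if x \<in> T then inv_into T g (restrict (g \<circ> \<sigma>) T x) else x) = \<sigma>"
      using g by (auto simp: fun_eq_iff permutes_in_image permutes_not_in)
    have "bij_betw (g \<circ> \<sigma>) T V"
      using \<sigma> assms permutes_imp_bij bij_betw_trans by blast
    then show "restrict (g \<circ> \<sigma>) T \<in> {f. f \<in> T \<rightarrow>\<^sub>E V \<and> bij_betw f T V}"
      by (auto simp: bij_betw_def inj_on_def)
  qed
qed

lemma perm_cols_eq_permanent: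
  assumes "finite S" "card S = m"
  shows "perm_cols A m S = permanent A {..<m} S"
proof -
  let ?s = "sorted_list_of_set S"
  have s: "bij_betw ((!) ?s) {..<m} S"
    using assms by (intro bij_betw_nth) auto
  have "perm_cols A m S = (\<Sum>\<sigma> | \<sigma> permutes {..<m}. \<Prod>x<m. A x (?s ! inv \<sigma> x))"
    unfolding perm_cols_def
  proof (intro sum.cong refl)
    fix \<sigma> assume "\<sigma> \<in> {\<sigma>. \<sigma> permutes {..<m}}"
    then have \<sigma>: "\<sigma> permutes {..<m}"
      by simp
    show "(\<Prod>k<m. A (\<sigma> k) (?s ! k)) = (\<Prod>x<m. A x (?s ! inv \<sigma> x))"
      using prod.permute[OF \<sigma>, of "\<lambda>x. A x (?s ! inv \<sigma> x)"] by (simp add: permutes_inverses(2)[OF \<sigma>])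
  qed
  also have "\<dots> = (\<Sum>\<sigma> | \<sigma> permutes {..<m}. \<Prod>x<m. A x (?s ! \<sigma> x))"
    by (rule sum_permutations_inverse[symmetric])
  also have "\<dots> = permanent A {..<m} S"
    by (rule permanent_eq_sum_permutes[OF s, symmetric])
  finally show ?thesis .
qed

lemma psi_eq_sum_permanent:
  assumes "finite S" "card S = m + 1"
  shows "psi A m S = (\<Sum>u\<in>S. permanent A {..<m} (S - {u}))"
proof -
  have "{S'. S' \<subseteq> S \<and> card S' = m} = (\<lambda>u. S - {u}) ` S"
  proof (intro equalityI subsetI)
    fix S' assume "S' \<in> {S'. S' \<subseteq> S \<and> card S' = m}"
    then have S': "S' \<subseteq> S" "card (S - S') = 1"
      using assms by (auto simp: card_Diff_subset finite_subset)
    then obtain u where "S - S' = {u}"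
      using card_1_singletonE by metis
    then show "S' \<in> (\<lambda>u. S - {u}) ` S"
      using S'(1) by (intro image_eqI[of _ _ u]) auto
  qed (use assms in auto)
  moreover have "inj_on (\<lambda>u. S - {u}) S"
    by (rule inj_onI) auto
  ultimately show ?thesis
    using assms by (simp add: psi_def sum.reindex perm_cols_eq_permanent)
qed

section \<open>Sparse kernel vectors from non-vanishing minors\<close>

lemma cofactor_vector_dvd:
  fixes M :: "'a \<Rightarrow> 'b \<Rightarrow> 'c::comm_ring_1"
  assumes "\<And>z :: 'c. z + z = 0" "finite T" "finite V"
    and "\<forall>r\<in>X - T. d dvd permanent M (insert r T) V" "x \<in> X"
  shows "d dvd (\<Sum>u\<in>V. M x u * permanent M T (V - {u}))"
proof (cases "x \<in> T")
  case True
  then show ?thesis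
    using assms(1-3) by (simp add: permanent_repeated_row_char2)
next
  case False
  then show ?thesis
    using assms(2-5) by (simp add: permanent_insert_row)
qed

lemma cofactor_weight_le:
  fixes A :: "'a \<Rightarrow> 'b \<Rightarrow> nat"
  assumes "ring_weight wt" "\<And>x v. x \<in> X \<Longrightarrow> v \<in> S \<Longrightarrow> wt (M x v) \<le> A x v"
    and "finite X" "finite S" "T \<subseteq> X" "V \<subseteq> S"
    and "bij_betw \<nu> (X - T) (S - V)" "\<forall>r\<in>X - T. 0 < A r (\<nu> r)"
  shows "(\<Sum>u\<in>V. wt (permanent M T (V - {u}))) \<le> (\<Sum>u\<in>S. permanent A X (S - {u}))"
proof -
  have "wt (permanent M T (V - {u})) \<le> permanent A X (S - {u})" if "u \<in> V" for u
  proof -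
    have "wt (permanent M T (V - {u})) \<le> permanent A T (V - {u})"
      using assms(2,5,6) by (intro ring_weight.wt_permanent_le[OF assms(1)]) auto
    also have "\<dots> \<le> permanent A (T \<union> (X - T)) ((V - {u}) \<union> \<nu> ` (X - T))"
      using assms(3-8) by (intro permanent_le_extend) (auto simp: bij_betw_def finite_subset)
    also have "T \<union> (X - T) = X"
      using assms(5) by auto
    also have "(V - {u}) \<union> \<nu> ` (X - T) = S - {u}"
      using assms(6,7) that by (auto simp: bij_betw_def)
    finally show ?thesis .
  qed
  then have "(\<Sum>u\<in>V. wt (permanent M T (V - {u}))) \<le> (\<Sum>u\<in>V. permanent A X (S - {u}))"
    by (rule sum_mono)
  also have "\<dots> \<le> (\<Sum>u\<in>S. permanent A X (S - {u}))"
    using assms(4,6) by (rule sum_mono2) simp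
  finally show ?thesis .
qed

lemma sparse_kernel_vector_from_minor:
  fixes M :: "'a \<Rightarrow> 'b \<Rightarrow> 'c::comm_ring_1" and A :: "'a \<Rightarrow> 'b \<Rightarrow> nat"
  assumes char2: "\<And>z :: 'c. z + z = 0"
    and wt: "ring_weight wt" "\<And>x v. x \<in> X \<Longrightarrow> v \<in> S \<Longrightarrow> wt (M x v) \<le> A x v"
    and fin: "finite X" "finite S"
    and minor: "T \<subseteq> X" "V \<subseteq> S" "j \<in> V" "\<not> d dvd permanent M T (V - {j})"
    and matching: "bij_betw \<nu> (X - T) (S - V)" "\<forall>r\<in>X - T. 0 < A r (\<nu> r)"
  shows "\<exists>V w. V \<subseteq> S \<and> (\<forall>x\<in>X. d dvd (\<Sum>u\<in>V. M x u * w u)) \<and> (\<exists>u\<in>V. \<not> d dvd w u)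
           \<and> (\<Sum>u\<in>V. wt (w u)) \<le> (\<Sum>u\<in>S. permanent A X (S - {u}))"
  using minor matching
proof (induction "card (X - T)" arbitrary: T V j \<nu> rule: less_induct)
  case less
  have "finite T" "finite V"
    using less.prems(1,2) fin by (auto intro: finite_subset)
  show ?case
  proof (cases "\<forall>r\<in>X - T. d dvd permanent M (insert r T) V")
    case True
    define w where "w u = permanent M T (V - {u})" for u
    have "\<forall>x\<in>X. d dvd (\<Sum>u\<in>V. M x u * w u)"
      using cofactor_vector_dvd[OF char2 \<open>finite T\<close> \<open>finite V\<close> True] by (simp add: w_def)
    moreover have "(\<Sum>u\<in>V. wt (w u)) \<le> (\<Sum>u\<in>S. permanent A X (S - {u}))"
      unfolding w_def using wt fin less.prems(1,2,5,6) by (rule cofactor_weight_le)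
    moreover have "\<not> d dvd w j"
      using less.prems(4) by (simp add: w_def)
    ultimately show ?thesis
      using less.prems(2,3) by blast
  next
    case False
    then obtain r where r: "r \<in> X - T" "\<not> d dvd permanent M (insert r T) V"
      by blast
    have r': "\<nu> r \<in> S - V"
      using bij_betwE[OF less.prems(5)] r(1) by blast
    have "bij_betw \<nu> (X - T - {r}) (S - V - {\<nu> r})"
      using r(1) r' by (intro bij_betw_DiffI[OF less.prems(5)]) auto
    moreover have "X - T - {r} = X - insert r T" "S - V - {\<nu> r} = S - insert (\<nu> r) V"
      by auto
    ultimately have "bij_betw \<nu> (X - insert r T) (S - insert (\<nu> r) V)"
      by simp
    moreover have "\<not> d dvd permanent M (insert r T) (insert (\<nu> r) V - {\<nu> r})"
      using r(2) r' by (simp add: insert_Diff_if)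
    moreover have "card (X - insert r T) < card (X - T)"
      using r(1) fin(1) by (intro psubset_card_mono) auto
    moreover have "insert r T \<subseteq> X" "insert (\<nu> r) V \<subseteq> S" "\<forall>r'\<in>X - insert r T. 0 < A r' (\<nu> r')"
      using r(1) r' less.prems(1,2,6) by auto
    ultimately show ?thesis
      by (intro less.hyps[of "insert r T" "insert (\<nu> r) V" "\<nu> r" \<nu>]) simp_all
  qed
qed

lemma sparse_kernel_vector:
  fixes M :: "'a \<Rightarrow> 'b \<Rightarrow> 'c::comm_ring_1" and A :: "'a \<Rightarrow> 'b \<Rightarrow> nat"
  assumes "\<And>z :: 'c. z + z = 0" "ring_weight wt" "\<And>x v. x \<in> X \<Longrightarrow> v \<in> S \<Longrightarrow> wt (M x v) \<le> A x v"
    and "finite X" "finite S" "\<not> d dvd 1" "(\<Sum>u\<in>S. permanent A X (S - {u})) \<noteq> 0"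
  shows "\<exists>V w. V \<subseteq> S \<and> (\<forall>x\<in>X. d dvd (\<Sum>u\<in>V. M x u * w u)) \<and> (\<exists>u\<in>V. \<not> d dvd w u)
           \<and> (\<Sum>u\<in>V. wt (w u)) \<le> (\<Sum>u\<in>S. permanent A X (S - {u}))"
proof -
  obtain j where j: "j \<in> S" "permanent A X (S - {j}) \<noteq> 0"
    using assms(7) by (rule sum.not_neutral_contains_not_neutral)
  then obtain f where f: "bij_betw f X (S - {j})" "\<forall>x\<in>X. A x (f x) \<noteq> 0"
    using assms(4) permanent_nonzeroE by blast
  have minor: "{j} \<subseteq> S" "\<not> d dvd permanent M {} ({j} - {j})"
    using j(1) assms(6) by auto
  have matching: "bij_betw f (X - {}) (S - {j})" "\<forall>x\<in>X - {}. 0 < A x (f x)"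
    using f by auto
  show ?thesis
    by (rule sparse_kernel_vector_from_minor[OF assms(1-5) empty_subsetI minor(1) singletonI minor(2) matching])
qed

section \<open>Polynomials modulo \<open>X^L - 1\<close>\<close>

definition poly_support :: "'a::zero poly \<Rightarrow> nat set" where
  "poly_support p = {n. coeff p n \<noteq> 0}"

definition poly_weight :: "'a::zero poly \<Rightarrow> nat" where
  "poly_weight p = card (poly_support p)"

lemma poly_support_subset_degree: "poly_support p \<subseteq> {..degree p}"
  by (auto simp: poly_support_def le_degree)

lemma finite_poly_support [simp]: "finite (poly_support p)"
  using poly_support_subset_degree by (rule finite_subset) simp

lemma poly_weight_0 [simp]: "poly_weight 0 = 0"
  by (simp add: poly_weight_def poly_support_def)

lemma poly_weight_1 [simp]: "poly_weight (1 :: 'a::comm_semiring_1 poly) = 1"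
proof -
  have "poly_support (1 :: 'a poly) = {0}"
    by (auto simp: poly_support_def coeff_1)
  then show ?thesis
    by (simp add: poly_weight_def)
qed

lemma poly_weight_add: "poly_weight (p + q) \<le> poly_weight p + poly_weight q"
proof -
  have "poly_support (p + q) \<subseteq> poly_support p \<union> poly_support q"
    by (auto simp: poly_support_def)
  then have "poly_weight (p + q) \<le> card (poly_support p \<union> poly_support q)"
    unfolding poly_weight_def by (intro card_mono) auto
  also have "\<dots> \<le> poly_weight p + poly_weight q"
    unfolding poly_weight_def by (rule card_Un_le)
  finally show ?thesis .
qed

lemma poly_weight_mult:
  fixes p q :: "'a::comm_semiring_0 poly"
  shows "poly_weight (p * q) \<le> poly_weight p * poly_weight q"
proof -
  have "poly_support (p * q) \<subseteq> (\<lambda>(i, j). i + j) ` (poly_support p \<times> poly_support q)"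
  proof
    fix n assume "n \<in> poly_support (p * q)"
    then have "(\<Sum>i\<le>n. coeff p i * coeff q (n - i)) \<noteq> 0"
      by (simp add: poly_support_def coeff_mult)
    then obtain i where "i \<le> n" "coeff p i * coeff q (n - i) \<noteq> 0"
      by (auto elim: sum.not_neutral_contains_not_neutral)
    then show "n \<in> (\<lambda>(i, j). i + j) ` (poly_support p \<times> poly_support q)"
      by (intro image_eqI[of _ _ "(i, n - i)"]) (auto simp: poly_support_def)
  qed
  then have "poly_weight (p * q) \<le> card ((\<lambda>(i, j). i + j) ` (poly_support p \<times> poly_support q))"
    unfolding poly_weight_def by (intro card_mono) auto
  also have "\<dots> \<le> card (poly_support p \<times> poly_support q)"
    by (rule card_image_le) simp
  finally show ?thesis
    by (simp add: poly_weight_def card_cartesian_product)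
qed

definition cyclic_modulus :: "nat \<Rightarrow> 'a::comm_ring_1 poly" where
  "cyclic_modulus L = monom 1 L - 1"

definition cyclic_weight :: "nat \<Rightarrow> 'a::field poly \<Rightarrow> nat" where
  "cyclic_weight L p = poly_weight (p mod cyclic_modulus L)"

lemma degree_cyclic_modulus:
  assumes "0 < L"
  shows "degree (cyclic_modulus L :: 'a::comm_ring_1 poly) = L"
proof -
  have "degree (monom 1 L + - 1 :: 'a poly) = degree (monom (1 :: 'a) L)"
    using assms by (intro degree_add_eq_left) (simp add: degree_monom_eq)
  then show ?thesis
    by (simp add: cyclic_modulus_def degree_monom_eq)
qed

lemma degree_mod_cyclic_modulus_less:
  fixes p :: "'a::field poly"
  assumes "0 < L"
  shows "degree (p mod cyclic_modulus L) < L"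
  using degree_mod_less[of "cyclic_modulus L" p] degree_cyclic_modulus[OF assms, where 'a = 'a] assms
  by fastforce

lemma mod_cyclic_modulus_eq_self:
  fixes p :: "'a::field poly"
  assumes "degree p < L"
  shows "p mod cyclic_modulus L = p"
  using assms by (intro mod_poly_less) (simp add: degree_cyclic_modulus)

lemma monom_mod_cyclic_modulus:
  fixes c :: "'a::field"
  assumes "0 < L"
  shows "monom c n mod cyclic_modulus L = monom c (n mod L)"
proof -
  have "cyclic_modulus L dvd (monom 1 L :: 'a poly) ^ (n div L) - 1"
    unfolding cyclic_modulus_def by (rule power_diff_1_eq[THEN dvdI])
  then have "cyclic_modulus L dvd monom c (n mod L) * ((monom 1 L) ^ (n div L) - 1)"
    by simp
  also have "monom c (n mod L) * ((monom 1 L) ^ (n div L) - 1) = monom c n - monom c (n mod L)"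
    by (simp add: monom_power mult_monom right_diff_distrib mult.commute)
  finally have "monom c n mod cyclic_modulus L = monom c (n mod L) mod cyclic_modulus L"
    by (simp add: mod_eq_dvd_iff)
  also have "\<dots> = monom c (n mod L)"
    using assms degree_monom_le[of c "n mod L"] by (intro mod_cyclic_modulus_eq_self) (meson le_less_trans mod_less_divisor)
  finally show ?thesis .
qed

lemma sum_mod_poly:
  fixes d :: "'a::field poly"
  shows "(\<Sum>z\<in>A. f z) mod d = (\<Sum>z\<in>A. f z mod d)"
  by (induction A rule: infinite_finite_induct) (simp_all add: poly_mod_add_left)

lemma sum_monom_mod_cyclic_modulus:
  fixes c :: "'b \<Rightarrow> 'a::field"
  assumes "0 < L"
  shows "(\<Sum>z\<in>A. monom (c z) (e z)) mod cyclic_modulus L = (\<Sum>z\<in>A. monom (c z) (e z mod L))"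
  using assms by (simp add: sum_mod_poly monom_mod_cyclic_modulus)

lemma poly_as_sum_of_monoms_less:
  assumes "degree p < L"
  shows "(\<Sum>a<L. monom (coeff p a) a) = p"
proof (rule poly_eqI)
  fix n
  show "coeff (\<Sum>a<L. monom (coeff p a) a) n = coeff p n"
    using assms coeff_eq_0[of p n] by (auto simp: coeff_sum)
qed

lemma poly_support_mod_cyclic_modulus:
  fixes p :: "'a::field poly"
  assumes "0 < L"
  shows "poly_support (p mod cyclic_modulus L) \<subseteq> (\<lambda>n. n mod L) ` poly_support p"
proof
  fix k assume "k \<in> poly_support (p mod cyclic_modulus L)"
  then have "(\<Sum>n\<le>degree p. coeff (monom (coeff p n) (n mod L)) k) \<noteq> 0"
    using sum_monom_mod_cyclic_modulus[OF assms, of "coeff p" id "{..degree p}"]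
    by (simp add: poly_support_def poly_as_sum_of_monoms coeff_sum del: coeff_monom)
  then obtain n where "coeff (monom (coeff p n) (n mod L)) k \<noteq> 0"
    by (auto elim: sum.not_neutral_contains_not_neutral)
  then show "k \<in> (\<lambda>n. n mod L) ` poly_support p"
    by (auto simp: poly_support_def split: if_splits)
qed

lemma cyclic_weight_le_poly_weight:
  fixes p :: "'a::field poly"
  assumes "0 < L"
  shows "cyclic_weight L p \<le> poly_weight p"
proof -
  have "cyclic_weight L p \<le> card ((\<lambda>n. n mod L) ` poly_support p)"
    unfolding cyclic_weight_def poly_weight_def
    using poly_support_mod_cyclic_modulus[OF assms] by (intro card_mono) auto
  also have "\<dots> \<le> poly_weight p"
    unfolding poly_weight_def by (rule card_image_le) simp
  finally show ?thesis .
qed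

lemma ring_weight_cyclic_weight:
  assumes "0 < L"
  shows "ring_weight (cyclic_weight L :: 'a::field poly \<Rightarrow> nat)"
proof
  fix p q :: "'a poly"
  show "cyclic_weight L (p + q) \<le> cyclic_weight L p + cyclic_weight L q"
    by (simp add: cyclic_weight_def poly_mod_add_left poly_weight_add)
  have "cyclic_weight L (p * q) = cyclic_weight L ((p mod cyclic_modulus L) * (q mod cyclic_modulus L))"
    by (simp add: cyclic_weight_def mod_mult_eq)
  also have "\<dots> \<le> poly_weight ((p mod cyclic_modulus L) * (q mod cyclic_modulus L))"
    by (rule cyclic_weight_le_poly_weight[OF assms])
  also have "\<dots> \<le> cyclic_weight L p * cyclic_weight L q"
    unfolding cyclic_weight_def by (rule poly_weight_mult)
  finally show "cyclic_weight L (p * q) \<le> cyclic_weight L p * cyclic_weight L q" .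
  show "cyclic_weight L 0 = 0"
    by (simp add: cyclic_weight_def)
  show "cyclic_weight L 1 \<le> 1"
    using cyclic_weight_le_poly_weight[OF assms, of 1] by simp
qed

lemma poly_support_mod_cyclic_modulus_less:
  fixes p :: "'a::field poly"
  assumes "0 < L"
  shows "poly_support (p mod cyclic_modulus L) \<subseteq> {..<L}"
  using poly_support_subset_degree degree_mod_cyclic_modulus_less[OF assms, of p] by fastforce

lemma coeff_mult_mod_cyclic_modulus:
  fixes p q :: "'a::field poly"
  assumes "0 < L" "i < L"
  shows "coeff ((p * q) mod cyclic_modulus L) i
    = (\<Sum>b<L. coeff (p mod cyclic_modulus L) ((i + L - b) mod L) * coeff (q mod cyclic_modulus L) b)"
proof -
  define p' q' where "p' = p mod cyclic_modulus L" and "q' = q mod cyclic_modulus L"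
  have "p' * q' = (\<Sum>a<L. monom (coeff p' a) a) * (\<Sum>b<L. monom (coeff q' b) b)"
    unfolding p'_def q'_def
    by (simp only: poly_as_sum_of_monoms_less[OF degree_mod_cyclic_modulus_less[OF assms(1)]])
  also have "\<dots> = (\<Sum>b<L. \<Sum>a<L. monom (coeff p' a * coeff q' b) (a + b))"
    by (subst sum.swap) (simp add: sum_product mult_monom)
  finally have reduced: "(p * q) mod cyclic_modulus L
      = (\<Sum>b<L. \<Sum>a<L. monom (coeff p' a * coeff q' b) ((a + b) mod L))"
    using assms(1) by (simp add: p'_def q'_def mod_mult_eq[symmetric] sum_mod_poly monom_mod_cyclic_modulus)
  have shift: "(a + b) mod L = i \<longleftrightarrow> a = (i + L - b) mod L" if "a < L" "b < L" for a b
    using that assms(2) by (auto simp: mod_if)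
  have "coeff (\<Sum>b<L. \<Sum>a<L. monom (coeff p' a * coeff q' b) ((a + b) mod L)) i
      = (\<Sum>b<L. \<Sum>a<L. if a = (i + L - b) mod L then coeff p' a * coeff q' b else 0)"
    by (auto simp: coeff_sum shift intro!: sum.cong)
  then show ?thesis
    unfolding reduced using assms(1) by (simp add: p'_def q'_def)
qed

lemma bit_poly_add_self: "(z :: bit poly) + z = 0"
  by (rule poly_eqI) (simp only: coeff_add, simp)

lemma cyclic_modulus_not_unit:
  assumes "0 < L"
  shows "\<not> is_unit (cyclic_modulus L :: 'a::field poly)"
proof -
  have "degree (cyclic_modulus L :: 'a poly) \<noteq> 0"
    using assms by (simp add: degree_cyclic_modulus)
  then show ?thesis
    by (metis degree_0 is_unit_iff_degree)
qed

section \<open>Circulant blocks as polynomials\<close>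

lemma mod_diff_eq_of_mod_add_eq:
  fixes i i' j j' L :: nat
  assumes "i \<le> L" "i' \<le> L" "(j + i') mod L = (j' + i) mod L"
  shows "(j + L - i) mod L = (j' + L - i') mod L"
proof -
  have "int L dvd int (j + i') - int (j' + i)"
    using assms(3) by (simp only: of_nat_eq_iff[symmetric, where 'a = int] of_nat_mod mod_eq_dvd_iff)
  moreover have "int (j + L - i) - int (j' + L - i') = int (j + i') - int (j' + i)"
    using assms(1,2) by (simp add: of_nat_diff)
  ultimately have "int ((j + L - i) mod L) = int ((j' + L - i') mod L)"
    by (simp only: of_nat_mod mod_eq_dvd_iff)
  then show ?thesis
    by simp
qed

lemma block_circulant_entry_eq:
  assumes "block_circulant m n L B" "x < m" "y < n" "i < L" "j < L" "i' < L" "j' < L"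
    and "(j + i') mod L = (j' + i) mod L"
  shows "B (x*L + i) (y*L + j) = B (x*L + i') (y*L + j')"
proof -
  have "(j + L - i) mod L = (j' + L - i') mod L"
    using assms(4,6,8) by (intro mod_diff_eq_of_mod_add_eq) auto
  then show ?thesis
    using assms(1-7) unfolding block_circulant_def by metis
qed

text \<open>The first column of the circulant block \<open>(x, y)\<close>: on a segment of length \<open>L\<close>, read as a
  polynomial modulo \<open>X^L - 1\<close>, the block acts as multiplication by this polynomial.\<close>

definition block_poly :: "nat \<Rightarrow> (nat \<Rightarrow> nat \<Rightarrow> bool) \<Rightarrow> nat \<Rightarrow> nat \<Rightarrow> bit poly" where
  "block_poly L B x y = (\<Sum>a<L. monom (of_bool (B (x*L + a) (y*L))) a)"

lemma coeff_block_poly: "coeff (block_poly L B x y) a = (if a < L then of_bool (B (x*L + a) (y*L)) else 0)"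
  by (simp add: block_poly_def coeff_sum)

lemma degree_block_poly:
  assumes "0 < L"
  shows "degree (block_poly L B x y) < L"
proof -
  have "degree (block_poly L B x y) \<le> L - 1"
    by (rule degree_le) (auto simp: coeff_block_poly)
  then show ?thesis
    using assms by linarith
qed

lemma cyclic_weight_block_poly:
  assumes "block_circulant m n L B" "0 < L" "x < m" "y < n"
  shows "cyclic_weight L (block_poly L B x y) = weight_matrix L B x y"
proof -
  let ?flip = "\<lambda>a. (L - a) mod L"
  have "B (x*L + a) (y*L + 0) = B (x*L + 0) (y*L + ?flip a)" if "a < L" for a
    using assms that by (intro block_circulant_entry_eq) (auto simp: mod_if)
  moreover have "?flip a < L" "?flip (?flip a) = a" if "a < L" for a
    using assms(2) that by (auto simp: mod_if)
  ultimately have "bij_betw ?flip {a. a < L \<and> B (x*L + a) (y*L)} {j. j < L \<and> B (x*L) (y*L + j)}"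
    by (intro bij_betw_byWitness[where f' = ?flip]) auto
  then have "card {a. a < L \<and> B (x*L + a) (y*L)} = weight_matrix L B x y"
    by (simp add: bij_betw_same_card weight_matrix_def)
  moreover have "poly_support (block_poly L B x y) = {a. a < L \<and> B (x*L + a) (y*L)}"
    by (auto simp: poly_support_def coeff_block_poly)
  ultimately show ?thesis
    using assms(2) by (simp add: cyclic_weight_def poly_weight_def mod_cyclic_modulus_eq_self degree_block_poly)
qed

lemma card_block_index_image:
  fixes L :: nat
  assumes "finite V" "\<And>y. y \<in> V \<Longrightarrow> K y \<subseteq> {..<L}"
  shows "card ((\<lambda>(y, k). y*L + k) ` (SIGMA y:V. K y)) = (\<Sum>y\<in>V. card (K y))"
proof -
  have "inj_on (\<lambda>(y, k). y*L + k) (SIGMA y:V. K y)"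
  proof (rule inj_onI, clarify)
    fix y k y' k' assume "y \<in> V" "k \<in> K y" "y' \<in> V" "k' \<in> K y'" "y*L + k = y'*L + k'"
    moreover have "k < L" "k' < L"
      using assms(2) \<open>y \<in> V\<close> \<open>k \<in> K y\<close> \<open>y' \<in> V\<close> \<open>k' \<in> K y'\<close> by auto
    moreover have "(y*L + k) div L = y" "(y'*L + k') div L = y'"
      using \<open>k < L\<close> \<open>k' < L\<close> by simp_all
    ultimately show "y = y' \<and> k = k'"
      by simp
  qed
  moreover have "\<forall>y\<in>V. finite (K y)"
    using assms(2) finite_nat_iff_bounded by blast
  ultimately show ?thesis
    using assms(1) by (simp add: card_image card_SigmaI)
qed

definition word_of :: "nat \<Rightarrow> nat set \<Rightarrow> (nat \<Rightarrow> 'a::field poly) \<Rightarrow> nat set" where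
  "word_of L V v = (\<lambda>(y, k). y*L + k) ` (SIGMA y:V. poly_support (v y mod cyclic_modulus L))"

lemma card_word_of:
  assumes "0 < L" "finite V"
  shows "card (word_of L V v) = (\<Sum>y\<in>V. cyclic_weight L (v y))"
  unfolding word_of_def cyclic_weight_def poly_weight_def
  by (rule card_block_index_image[OF assms(2) poly_support_mod_cyclic_modulus_less[OF assms(1)]])

lemma word_of_subset:
  assumes "0 < L" "V \<subseteq> {..<n}"
  shows "word_of L V v \<subseteq> {..<n*L}"
proof
  fix c assume "c \<in> word_of L V v"
  then obtain y k where "y \<in> V" "k \<in> poly_support (v y mod cyclic_modulus L)" "c = y*L + k"
    by (auto simp: word_of_def)
  then have "y < n" "k < L" "c = y*L + k"
    using assms poly_support_mod_cyclic_modulus_less by blast+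
  then have "c < (y + 1) * L"
    by simp
  also have "\<dots> \<le> n * L"
    using \<open>y < n\<close> by (intro mult_right_mono) auto
  finally show "c \<in> {..<n*L}"
    by simp
qed

lemma word_of_nonempty:
  assumes "y \<in> V" "\<not> cyclic_modulus L dvd v y"
  shows "word_of L V v \<noteq> {}"
proof -
  have "v y mod cyclic_modulus L \<noteq> 0"
    using assms(2) by (simp add: mod_eq_0_iff_dvd)
  then obtain k where "k \<in> poly_support (v y mod cyclic_modulus L)"
    by (auto simp: poly_support_def poly_eq_iff)
  then show ?thesis
    using assms(1) by (auto simp: word_of_def)
qed

lemma coeff_block_row_mod_cyclic_modulus:
  assumes "block_circulant m n L B" "0 < L" "x < m" "i < L" "V \<subseteq> {..<n}"
  shows "coeff ((\<Sum>y\<in>V. block_poly L B x y * v y) mod cyclic_modulus L) i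
    = of_nat (card {c \<in> word_of L V v. B (x*L + i) c})"
proof -
  let ?d = "cyclic_modulus L :: bit poly"
  let ?K = "\<lambda>y. {b \<in> poly_support (v y mod ?d). B (x*L + i) (y*L + b)}"
  have K: "?K y \<subseteq> {..<L}" for y
    using poly_support_mod_cyclic_modulus_less[OF assms(2)] by blast
  have "finite V"
    using assms(5) finite_nat_iff_bounded by blast
  have "coeff ((\<Sum>y\<in>V. block_poly L B x y * v y) mod ?d) i
      = (\<Sum>y\<in>V. \<Sum>b<L. coeff (block_poly L B x y) ((i + L - b) mod L) * coeff (v y mod ?d) b)"
    using assms(2,4)
    by (simp add: sum_mod_poly coeff_sum coeff_mult_mod_cyclic_modulus mod_cyclic_modulus_eq_self degree_block_poly)
  also have "\<dots> = (\<Sum>y\<in>V. \<Sum>b<L. of_bool (b \<in> ?K y))"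
  proof (intro sum.cong refl)
    fix y b assume "y \<in> V" "b \<in> {..<L}"
    then have "B (x*L + (i + L - b) mod L) (y*L + 0) = B (x*L + i) (y*L + b)"
      using assms by (intro block_circulant_entry_eq) (auto simp: mod_if)
    then show "coeff (block_poly L B x y) ((i + L - b) mod L) * coeff (v y mod ?d) b = of_bool (b \<in> ?K y)"
      using assms(2) by (cases "coeff (v y mod ?d) b = 0") (auto simp: coeff_block_poly poly_support_def)
  qed
  also have "\<dots> = of_nat (\<Sum>y\<in>V. card (?K y))"
    using K by (simp add: Int_absorb1 Int_def[symmetric])
  also have "(\<Sum>y\<in>V. card (?K y)) = card ((\<lambda>(y, k). y*L + k) ` (SIGMA y:V. ?K y))"
    using \<open>finite V\<close> K by (rule card_block_index_image[symmetric])
  also have "(\<lambda>(y, k). y*L + k) ` (SIGMA y:V. ?K y) = {c \<in> word_of L V v. B (x*L + i) c}"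
    by (auto simp: word_of_def)
  finally show ?thesis .
qed

lemma word_of_in_code:
  assumes "block_circulant m n L B" "0 < L" "V \<subseteq> {..<n}"
    and "\<forall>x\<in>{..<m}. cyclic_modulus L dvd (\<Sum>y\<in>V. block_poly L B x y * v y)"
  shows "word_of L V v \<in> code (m*L) (n*L) B"
  unfolding code_def
proof (intro CollectI conjI allI impI)
  show "word_of L V v \<subseteq> {..<n*L}"
    using assms(2,3) by (rule word_of_subset)
  fix r assume "r < m*L"
  then have "r div L < m" "r mod L < L" "r = (r div L) * L + r mod L"
    using assms(2) by (simp_all add: less_mult_imp_div_less)
  then have "(of_nat (card {c \<in> word_of L V v. B r c}) :: bit) = 0"
    using coeff_block_row_mod_cyclic_modulus[OF assms(1,2) _ _ assms(3), of "r div L" "r mod L" v] assms(4)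
    by (simp add: mod_eq_0_iff_dvd)
  then show "even (card {c \<in> word_of L V v. B r c})"
    by (metis even_of_nat_iff even_zero)
qed

lemma block_circulant_codeword_le_psi:
  assumes "block_circulant m n L B" "0 < L" "S \<subseteq> {..<n}" "card S = m + 1"
    and "psi (weight_matrix L B) m S \<noteq> 0"
  shows "\<exists>c\<in>code (m*L) (n*L) B. c \<noteq> {} \<and> card c \<le> psi (weight_matrix L B) m S"
proof -
  have "finite S"
    using assms(3) finite_nat_iff_bounded by blast
  then have psi: "psi (weight_matrix L B) m S = (\<Sum>u\<in>S. permanent (weight_matrix L B) {..<m} (S - {u}))"
    using assms(4) by (rule psi_eq_sum_permanent)
  have "\<exists>V w. V \<subseteq> S \<and> (\<forall>x\<in>{..<m}. cyclic_modulus L dvd (\<Sum>u\<in>V. block_poly L B x u * w u))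
      \<and> (\<exists>u\<in>V. \<not> cyclic_modulus L dvd w u)
      \<and> (\<Sum>u\<in>V. cyclic_weight L (w u)) \<le> (\<Sum>u\<in>S. permanent (weight_matrix L B) {..<m} (S - {u}))"
  proof (rule sparse_kernel_vector)
    show "ring_weight (cyclic_weight L :: bit poly \<Rightarrow> nat)"
      using assms(2) by (rule ring_weight_cyclic_weight)
    show "cyclic_weight L (block_poly L B x y) \<le> weight_matrix L B x y" if "x \<in> {..<m}" "y \<in> S" for x y
      using assms(1-3) that by (subst cyclic_weight_block_poly) auto
    show "\<not> cyclic_modulus L dvd (1 :: bit poly)"
      using assms(2) by (rule cyclic_modulus_not_unit)
  qed (use bit_poly_add_self \<open>finite S\<close> assms(5) psi in auto)
  then obtain V w where V: "V \<subseteq> S" "\<forall>x\<in>{..<m}. cyclic_modulus L dvd (\<Sum>u\<in>V. block_poly L B x u * w u)"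
    and w: "\<exists>u\<in>V. \<not> cyclic_modulus L dvd w u" "(\<Sum>u\<in>V. cyclic_weight L (w u)) \<le> psi (weight_matrix L B) m S"
    unfolding psi by blast
  have "finite V"
    using \<open>V \<subseteq> S\<close> \<open>finite S\<close> finite_subset by blast
  then have "card (word_of L V w) \<le> psi (weight_matrix L B) m S"
    using assms(2) w(2) by (simp add: card_word_of)
  moreover have "word_of L V w \<noteq> {}"
    using w(1) word_of_nonempty by blast
  moreover have "word_of L V w \<in> code (m*L) (n*L) B"
    using V assms(1-3) by (intro word_of_in_code) auto
  ultimately show ?thesis
    by blast
qed

lemma code_permute:
  assumes "p permutes {..<M}" "q permutes {..<N}" "c \<in> code M N (\<lambda>i j. H (p i) (q j))"
  shows "q ` c \<in> code M N H"
  unfolding code_def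
proof (intro CollectI conjI allI impI)
  have "c \<subseteq> {..<N}"
    using assms(3) by (simp add: code_def)
  then show "q ` c \<subseteq> {..<N}"
    using permutes_image[OF assms(2)] by blast
  fix r assume "r < M"
  then have r: "inv p r < M" "p (inv p r) = r"
    using permutes_in_image[OF permutes_inv[OF assms(1)], of r] permutes_inverses(1)[OF assms(1)]
    by simp_all
  have "{j \<in> q ` c. H r j} = q ` {j \<in> c. H (p (inv p r)) (q j)}"
    using r(2) by auto
  moreover have "inj_on q {j \<in> c. H (p (inv p r)) (q j)}"
    using permutes_inj[OF assms(2)] by (simp add: inj_on_def)
  ultimately show "even (card {j \<in> q ` c. H r j})"
    using assms(3) r(1) by (simp add: card_image code_def)
qed

lemma dmin_le_card:
  assumes "c \<in> C" "c \<noteq> {}"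
  shows "dmin C \<le> enat (card c)"
  unfolding dmin_def using assms by (intro Inf_lower) blast

theorem theorem3:
  fixes s lam rho L :: nat
    and H :: "nat \<Rightarrow> nat \<Rightarrow> bool"
    and p q :: "nat \<Rightarrow> nat"
  assumes "s > 0" "lam > 0" "rho > 0" "L > 0"
    and "p permutes {..<s*lam*L}"
    and "q permutes {..<s*rho*L}"
    and "block_circulant (s*lam) (s*rho) L (\<lambda>i j. H (p i) (q j))"
  shows "dmin (code (s*lam*L) (s*rho*L) H)
     \<le> Inf {enat (psi (weight_matrix L (\<lambda>i j. H (p i) (q j))) (s*lam) S) | S.
              S \<subseteq> {..<s*rho} \<and> card S = s*lam + 1 \<and>
              psi (weight_matrix L (\<lambda>i j. H (p i) (q j))) (s*lam) S \<noteq> 0}"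
proof -
  define A where "A = weight_matrix L (\<lambda>i j. H (p i) (q j))"
  have "dmin (code (s*lam*L) (s*rho*L) H) \<le> enat (psi A (s*lam) S)"
    if S: "S \<subseteq> {..<s*rho}" "card S = s*lam + 1" "psi A (s*lam) S \<noteq> 0" for S
  proof -
    obtain c where c: "c \<in> code (s*lam*L) (s*rho*L) (\<lambda>i j. H (p i) (q j))" "c \<noteq> {}"
      "card c \<le> psi A (s*lam) S"
      using block_circulant_codeword_le_psi[OF assms(7,4) S[unfolded A_def]] by (auto simp: A_def)
    have "q ` c \<in> code (s*lam*L) (s*rho*L) H"
      using assms(5,6) c(1) by (rule code_permute)
    moreover have "card (q ` c) = card c"
      using permutes_inj[OF assms(6)] by (simp add: card_image inj_on_subset)
    ultimately show ?thesis
      using dmin_le_card[of "q ` c"] c(2,3) by (metis image_is_empty order.trans enat_ord_simps(1))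
  qed
  then show ?thesis
    unfolding A_def by (auto intro!: Inf_greatest)
qed

end
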